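(* Let $d\in\mathbb{N}$, let $P$ be a stationary and ergodic probability measure on $\Omega=[0,1]^{\mathcal{K}^d}$, and fix an integer $0\le q<d$. For each $t\in[0,1]$ let $\widehat\beta_q(t)$ be the non-random constant such that $|\Lambda_n|^{-1}\beta_q^n(t)\to\widehat\beta_q(t)$ almost surely (such a constant exists for each $t$). Assume that for every $Q\in\mathcal{K}^d$ the marginal distribution function $F^Q(t)=P(\omega_Q\le t)$ is continuous in $t\in[0,1]$. Then the functions $t\mapsto|\Lambda_n|^{-1}E[\beta_q^n(t)]$ converge to $\widehat\beta_q$ uniformly on $[0,1]$ as $n\to\infty$.
   Context: An elementary interval is $[l,l+1]$ or $[l]=[l,l]$ with $l\in\mathbb{Z}$; an elementary cube in $\mathbb{R}^d$ is a product of $d$ elementary intervals, of dimension equal to the number of nondegenerate factors; $\mathcal{K}^d$ is the set of all elementary cubes. A cubical set is a union of elementary cubes. For a cubical set $X$, $C_k(X)$ is the free $\mathbb{Z}$-module on the $k$-dimensional elementary cubes contained in $X$ with the standard cubical boundary operator; $H_k(X)$ is the resulting homology and, for bounded $X$, $\beta_k(X)$ is the rank of the free part of $H_k(X)$. $\Omega=[0,1]^{\mathcal{K}^d}$ with product topology and Borel $\sigma$-field, $\omega=(\omega_Q)_{Q\in\mathcal{K}^d}$; $\tau_x\omega=(\omega_{-x+Q})_Q$ for $x\in\mathbb{Z}^d$; stationarity: $P\circ\tau_x^{-1}=P$ for all $x$; ergodicity: translation-invariant events have probability $0$ or $1$; $E$ is expectation under $P$. $X(t)=\bigcup\{Q:\omega_Q\le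 t\}$, $\Lambda_n=[-n,n]^d$, $X^n(t)=X(t)\cap\Lambda_n$, $\beta_q^n(t)=\beta_q(X^n(t))$, $|\Lambda_n|=(2n)^d$. *)

theory Defs
  imports "HOL-Probability.Probability"
begin

text \<open>An elementary interval is encoded as (l, b):
  b = True means [l, l+1], b = False means [l] = [l,l].  An elementary cube in R^d
  is a map nat => int * bool, with coordinates i >= d fixed to (0, False).
  Points of R^d are maps nat => real vanishing at coordinates i >= d.\<close>

type_synonym cube = "nat \<Rightarrow> int \<times> bool"
type_synonym chain = "cube \<Rightarrow> int"

definition K :: "nat \<Rightarrow> cube set" where
  "K d = {Q. \<forall>i\<ge>d. Q i = (0, False)}"

definition cube_set :: "nat \<Rightarrow> cube \<Rightarrow> (nat \<Rightarrow> real) set" where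
  "cube_set d Q = {p. (\<forall>i<d. real_of_int (fst (Q i)) \<le> p i \<and>
                        p i \<le> real_of_int (fst (Q i)) + (if snd (Q i) then 1 else 0))
                   \<and> (\<forall>i\<ge>d. p i = 0)}"

definition cube_dim :: "nat \<Rightarrow> cube \<Rightarrow> nat" where
  "cube_dim d Q = card {i. i < d \<and> snd (Q i)}"

definition cubes :: "nat \<Rightarrow> (nat \<Rightarrow> real) set \<Rightarrow> nat \<Rightarrow> cube set" where
  "cubes d S k = {Q \<in> K d. cube_dim d Q = k \<and> cube_set d Q \<subseteq> S}"

definition chains :: "nat \<Rightarrow> (nat \<Rightarrow> real) set \<Rightarrow> nat \<Rightarrow> chain set" where
  "chains d S k = {c. finite {Q. c Q \<noteq> 0} \<and> (\<forall>Q. c Q \<noteq> 0 \<longrightarrow> Q \<in> cubes d S k)}"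

definition bd_cube :: "nat \<Rightarrow> cube \<Rightarrow> chain" where
  "bd_cube d Q = (\<lambda>R. \<Sum>i\<in>{i. i < d \<and> snd (Q i)}.
      (-1) ^ card {j. j < i \<and> snd (Q j)} *
      ((if R = Q(i := (fst (Q i) + 1, False)) then 1 else 0)
     - (if R = Q(i := (fst (Q i), False)) then 1 else 0)))"

definition bd :: "nat \<Rightarrow> chain \<Rightarrow> chain" where
  "bd d c = (\<lambda>R. \<Sum>Q\<in>{Q. c Q \<noteq> 0}. c Q * bd_cube d Q R)"

definition cycles :: "nat \<Rightarrow> (nat \<Rightarrow> real) set \<Rightarrow> nat \<Rightarrow> chain set" where
  "cycles d S k = {c \<in> chains d S k. bd d c = (\<lambda>_. 0)}"

definition boundaries :: "nat \<Rightarrow> (nat \<Rightarrow> real) set \<Rightarrow> nat \<Rightarrow> chain set" where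
  "boundaries d S k = bd d ` chains d S (Suc k)"

text \<open>beta_k(S): rank of H_k(S) = maximal number of Z-linearly independent homology
  classes (= rank of the free part of H_k).\<close>
definition betti :: "nat \<Rightarrow> (nat \<Rightarrow> real) set \<Rightarrow> nat \<Rightarrow> nat" where
  "betti d S k = Sup {m. \<exists>z :: nat \<Rightarrow> chain. (\<forall>j<m. z j \<in> cycles d S k) \<and>
      (\<forall>a :: nat \<Rightarrow> int. (\<lambda>R. \<Sum>j<m. a j * z j R) \<in> boundaries d S k \<longrightarrow> (\<forall>j<m. a j = 0))}"

definition Omega :: "nat \<Rightarrow> (cube \<Rightarrow> real) measure" where
  "Omega d = PiM (K d) (\<lambda>_. restrict_space borel {0..1::real})"

definition shift_cube :: "nat \<Rightarrow> (nat \<Rightarrow> int) \<Rightarrow> cube \<Rightarrow> cube" where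
  "shift_cube d x Q = (\<lambda>i. if i < d then (fst (Q i) + x i, snd (Q i)) else Q i)"

definition tau :: "nat \<Rightarrow> (nat \<Rightarrow> int) \<Rightarrow> (cube \<Rightarrow> real) \<Rightarrow> (cube \<Rightarrow> real)" where
  "tau d x \<omega> = restrict (\<lambda>Q. \<omega> (shift_cube d (\<lambda>i. - x i) Q)) (K d)"

definition stationary :: "nat \<Rightarrow> (cube \<Rightarrow> real) measure \<Rightarrow> bool" where
  "stationary d P \<longleftrightarrow> (\<forall>x. distr P P (tau d x) = P)"

definition ergodic :: "nat \<Rightarrow> (cube \<Rightarrow> real) measure \<Rightarrow> bool" where
  "ergodic d P \<longleftrightarrow> (\<forall>A \<in> sets P. (\<forall>x. tau d x -` A \<inter> space P = A) \<longrightarrow>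
       measure P A = 0 \<or> measure P A = 1)"

definition Xt :: "nat \<Rightarrow> (cube \<Rightarrow> real) \<Rightarrow> real \<Rightarrow> (nat \<Rightarrow> real) set" where
  "Xt d \<omega> t = \<Union>{cube_set d Q | Q. Q \<in> K d \<and> \<omega> Q \<le> t}"

definition Lambda :: "nat \<Rightarrow> nat \<Rightarrow> (nat \<Rightarrow> real) set" where
  "Lambda d n = {p. (\<forall>i<d. - real n \<le> p i \<and> p i \<le> real n) \<and> (\<forall>i\<ge>d. p i = 0)}"

definition Xn :: "nat \<Rightarrow> (cube \<Rightarrow> real) \<Rightarrow> real \<Rightarrow> nat \<Rightarrow> (nat \<Rightarrow> real) set" where
  "Xn d \<omega> t n = Xt d \<omega> t \<inter> Lambda d n"

definition betti_n :: "nat \<Rightarrow> nat \<Rightarrow> (cube \<Rightarrow> real) \<Rightarrow> real \<Rightarrow> nat \<Rightarrow> nat" where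
  "betti_n d q \<omega> t n = betti d (Xn d \<omega> t n) q"

end

theory Submission
  imports Defs
begin

text \<open>By linear algebra over \<open>\<int>\<close>, removing a cube from the support of the cycles or adding
  one to the support of the bounding chains changes the rank of the homology by at most one.
  Hence \<open>|\<beta>_q^n(t) - \<beta>_q^n(s)|\<close> is at most the number of cubes of \<open>\<Lambda>_n\<close> having a coface
  that appears during \<open>(s, t]\<close>. Taking expectations and using stationarity, the normalised
  expectations \<open>f_n\<close> satisfy \<open>|f_n(t) - f_n(s)| \<le> 12^d |G(t) - G(s)|\<close>, where \<open>G\<close> is the sum of
  the (continuous) marginal distribution functions of the finitely many cubes at the origin.
  So the \<open>f_n\<close> are uniformly equicontinuous on \<open>[0, 1]\<close>; they converge pointwise to
  \<open>bhat\<close> by dominated convergence, and on a compact set this forces uniform convergence.\<close>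

section \<open>Rank of cycles modulo boundaries with separate supports\<close>

definition chains_on :: "cube set \<Rightarrow> chain set" where
  "chains_on A = {c. finite {Q. c Q \<noteq> 0} \<and> (\<forall>Q. c Q \<noteq> 0 \<longrightarrow> Q \<in> A)}"

definition cycles_on :: "nat \<Rightarrow> cube set \<Rightarrow> chain set" where
  "cycles_on d A = {c \<in> chains_on A. bd d c = (\<lambda>_. 0)}"

definition boundaries_on :: "nat \<Rightarrow> cube set \<Rightarrow> chain set" where
  "boundaries_on d B = bd d ` chains_on B"

definition lin_comb :: "nat \<Rightarrow> (nat \<Rightarrow> int) \<Rightarrow> (nat \<Rightarrow> chain) \<Rightarrow> chain" where
  "lin_comb m a z = (\<lambda>R. \<Sum>j<m. a j * z j R)"

definition independent_mod :: "nat \<Rightarrow> cube set \<Rightarrow> cube set \<Rightarrow> nat \<Rightarrow> (nat \<Rightarrow> chain) \<Rightarrow> bool" where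
  "independent_mod d A B m z \<longleftrightarrow> (\<forall>j<m. z j \<in> cycles_on d A) \<and>
     (\<forall>a. lin_comb m a z \<in> boundaries_on d B \<longrightarrow> (\<forall>j<m. a j = 0))"

definition indep_sizes :: "nat \<Rightarrow> cube set \<Rightarrow> cube set \<Rightarrow> nat set" where
  "indep_sizes d A B = {m. \<exists>z. independent_mod d A B m z}"

text \<open>Letting the supports of the cycles and of the bounding chains vary independently allows
  the Betti number to be changed one cube at a time.\<close>
definition rel_rank :: "nat \<Rightarrow> cube set \<Rightarrow> cube set \<Rightarrow> nat" where
  "rel_rank d A B = Sup (indep_sizes d A B)"

lemma betti_eq_rel_rank: "betti d S k = rel_rank d (cubes d S k) (cubes d S (Suc k))"
  unfolding betti_def rel_rank_def indep_sizes_def independent_mod_def lin_comb_def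
    cycles_on_def boundaries_on_def chains_on_def cycles_def chains_def boundaries_def
  by simp

lemma bd_linear:
  assumes "c1 \<in> chains_on A" "c2 \<in> chains_on B"
  shows "bd d (\<lambda>Q. k1 * c1 Q + k2 * c2 Q) = (\<lambda>R. k1 * bd d c1 R + k2 * bd d c2 R)"
proof
  fix R
  let ?F = "{Q. c1 Q \<noteq> 0} \<union> {Q. c2 Q \<noteq> 0}"
  have F: "finite ?F" using assms by (auto simp: chains_on_def)
  have bd_F: "bd d c R = (\<Sum>Q\<in>?F. c Q * bd_cube d Q R)" if "{Q. c Q \<noteq> 0} \<subseteq> ?F" for c
    unfolding bd_def by (rule sum.mono_neutral_left[OF F that]) auto
  have "bd d (\<lambda>Q. k1 * c1 Q + k2 * c2 Q) R = (\<Sum>Q\<in>?F. (k1 * c1 Q + k2 * c2 Q) * bd_cube d Q R)"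
    by (rule bd_F) auto
  also have "\<dots> = k1 * (\<Sum>Q\<in>?F. c1 Q * bd_cube d Q R) + k2 * (\<Sum>Q\<in>?F. c2 Q * bd_cube d Q R)"
    by (simp add: sum.distrib sum_distrib_left algebra_simps)
  also have "\<dots> = k1 * bd d c1 R + k2 * bd d c2 R"
    using bd_F[of c1] bd_F[of c2] by auto
  finally show "bd d (\<lambda>Q. k1 * c1 Q + k2 * c2 Q) R = k1 * bd d c1 R + k2 * bd d c2 R" .
qed

lemma chains_on_linear:
  assumes "c1 \<in> chains_on A" "c2 \<in> chains_on A"
  shows "(\<lambda>Q. k1 * c1 Q + k2 * c2 Q) \<in> chains_on A"
proof -
  have "{Q. k1 * c1 Q + k2 * c2 Q \<noteq> 0} \<subseteq> {Q. c1 Q \<noteq> 0} \<union> {Q. c2 Q \<noteq> 0}" by auto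
  then show ?thesis using assms unfolding chains_on_def by (auto intro: finite_subset)
qed

lemma chains_on_mono: "A \<subseteq> A' \<Longrightarrow> chains_on A \<subseteq> chains_on A'"
  by (auto simp: chains_on_def)

lemma cycles_on_mono: "A \<subseteq> A' \<Longrightarrow> cycles_on d A \<subseteq> cycles_on d A'"
  unfolding cycles_on_def using chains_on_mono by blast

lemma boundaries_on_mono: "B \<subseteq> B' \<Longrightarrow> boundaries_on d B \<subseteq> boundaries_on d B'"
  unfolding boundaries_on_def using chains_on_mono by blast

lemma zero_in_boundaries_on: "(\<lambda>_. 0) \<in> boundaries_on d B"
proof -
  have "bd d (\<lambda>_. 0) = (\<lambda>_. 0)" by (simp add: bd_def)
  moreover have "(\<lambda>_. 0) \<in> chains_on B" by (simp add: chains_on_def)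
  ultimately show ?thesis unfolding boundaries_on_def by (metis image_eqI)
qed

lemma cycles_on_linear:
  assumes "c1 \<in> cycles_on d A" "c2 \<in> cycles_on d A"
  shows "(\<lambda>Q. k1 * c1 Q + k2 * c2 Q) \<in> cycles_on d A"
  using assms bd_linear[of c1 A c2 A d k1 k2] chains_on_linear[of c1 A c2 k1 k2]
  by (auto simp: cycles_on_def)

lemma boundaries_on_linear:
  assumes "b1 \<in> boundaries_on d B" "b2 \<in> boundaries_on d B"
  shows "(\<lambda>R. k1 * b1 R + k2 * b2 R) \<in> boundaries_on d B"
proof -
  obtain c1 c2 where c: "c1 \<in> chains_on B" "c2 \<in> chains_on B" "b1 = bd d c1" "b2 = bd d c2"
    using assms by (auto simp: boundaries_on_def)
  have "(\<lambda>R. k1 * b1 R + k2 * b2 R) = bd d (\<lambda>Q. k1 * c1 Q + k2 * c2 Q)"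
    using bd_linear[OF c(1,2)] c by simp
  then show ?thesis unfolding boundaries_on_def using chains_on_linear[OF c(1,2)] by blast
qed

lemma boundaries_on_insert:
  assumes "b \<in> boundaries_on d (insert \<tau> B)"
  obtains b' \<kappa> where "b' \<in> boundaries_on d B"
    "b = (\<lambda>R. 1 * b' R + \<kappa> * bd d (\<lambda>Q. if Q = \<tau> then 1 else 0) R)"
proof -
  obtain c where c: "c \<in> chains_on (insert \<tau> B)" "b = bd d c"
    using assms by (auto simp: boundaries_on_def)
  define c' where "c' = (\<lambda>Q. if Q = \<tau> then 0 else c Q)"
  have c': "c' \<in> chains_on B"
    using c(1) unfolding chains_on_def c'_def
    by (auto intro: finite_subset[of _ "{Q. c Q \<noteq> 0}"])
  have \<tau>: "(\<lambda>Q. if Q = \<tau> then 1 else 0) \<in> chains_on (insert \<tau> B)"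
    by (simp add: chains_on_def)
  have "c = (\<lambda>Q. 1 * c' Q + c \<tau> * (if Q = \<tau> then 1 else 0))"
    by (auto simp: c'_def)
  then have "b = (\<lambda>R. 1 * bd d c' R + c \<tau> * bd d (\<lambda>Q. if Q = \<tau> then 1 else 0) R)"
    using c(2) bd_linear[OF c' \<tau>, of d 1 "c \<tau>"] by metis
  then show ?thesis using c' that unfolding boundaries_on_def by blast
qed

lemma independent_mod_Suc: "independent_mod d A B (Suc m) z \<Longrightarrow> independent_mod d A B m z"
  unfolding independent_mod_def
proof (intro conjI allI impI, goal_cases)
  case (1 j)
  then show ?case by auto
next
  case (2 a j)
  have "lin_comb (Suc m) (a(m := 0)) z = lin_comb m a z"
    by (simp add: lin_comb_def)
  then have "\<forall>j<Suc m. (a(m := 0)) j = 0" using 2 by metis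
  then show ?case using 2 by (metis fun_upd_other less_Suc_eq nat_neq_iff)
qed

lemma zero_in_indep_sizes: "0 \<in> indep_sizes d A B"
  by (auto simp: indep_sizes_def independent_mod_def)

lemma lin_comb_transpose:
  assumes "p < m" "k < m"
  shows "lin_comb m (a \<circ> Transposition.transpose p k) (z \<circ> Transposition.transpose p k) = lin_comb m a z"
proof
  fix R
  have "bij_betw (Transposition.transpose p k) {..<m} {..<m}"
    using assms by (intro bij_betw_transpose_iff) auto
  then show "lin_comb m (a \<circ> Transposition.transpose p k) (z \<circ> Transposition.transpose p k) R
      = lin_comb m a z R"
    unfolding lin_comb_def using sum.reindex_bij_betw[of _ _ _ "\<lambda>j. a j * z j R"] by simp
qed

lemma independent_mod_transpose:
  assumes "independent_mod d A B m z" "p < m" "k < m"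
  shows "independent_mod d A B m (z \<circ> Transposition.transpose p k)"
  unfolding independent_mod_def
proof (intro conjI allI impI)
  fix j assume "j < m"
  then have "Transposition.transpose p k j < m"
    using assms(2,3) by (cases "j = p \<or> j = k") (auto simp: transpose_apply_other)
  then show "(z \<circ> Transposition.transpose p k) j \<in> cycles_on d A"
    using assms(1) by (auto simp: independent_mod_def)
next
  fix a j assume a: "lin_comb m a (z \<circ> Transposition.transpose p k) \<in> boundaries_on d B" and j: "j < m"
  have "lin_comb m (a \<circ> Transposition.transpose p k) z = lin_comb m a (z \<circ> Transposition.transpose p k)"
    using lin_comb_transpose[OF assms(2,3), of a "z \<circ> Transposition.transpose p k"]
    by (simp add: comp_def transpose_involutory)
  then have "\<forall>i<m. a (Transposition.transpose p k i) = 0"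
    using a assms(1) unfolding independent_mod_def by (metis comp_apply)
  moreover have "Transposition.transpose p k j < m"
    using assms(2,3) j by (cases "j = p \<or> j = k") (auto simp: transpose_apply_other)
  ultimately show "a j = 0" by (metis transpose_involutory)
qed

text \<open>Eliminate \<open>\<sigma>\<close> from \<open>y 0, \<dots>, y (k - 1)\<close> using the pivot \<open>y k\<close>.\<close>
lemma independent_mod_eliminate_cube:
  assumes y: "independent_mod d (insert \<sigma> A) B (Suc k) y" and yk: "y k \<sigma> \<noteq> 0"
  shows "independent_mod d A B k (\<lambda>j R. y k \<sigma> * y j R + (- y j \<sigma>) * y k R)"
    (is "independent_mod d A B k ?w")
  unfolding independent_mod_def
proof (intro conjI allI impI)
  fix j assume j: "j < k"
  have "y j \<in> cycles_on d (insert \<sigma> A)" "y k \<in> cycles_on d (insert \<sigma> A)"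
    using y j by (auto simp: independent_mod_def)
  then have "?w j \<in> cycles_on d (insert \<sigma> A)" by (rule cycles_on_linear)
  moreover have "?w j \<sigma> = 0" by simp
  ultimately show "?w j \<in> cycles_on d A" by (auto simp: cycles_on_def chains_on_def)
next
  fix b j assume b: "lin_comb k b ?w \<in> boundaries_on d B" and j: "j < k"
  define a where "a = (\<lambda>j. if j < k then b j * y k \<sigma> else - (\<Sum>i<k. b i * y i \<sigma>))"
  have "lin_comb (Suc k) a y = lin_comb k b ?w"
    by (simp add: lin_comb_def a_def sum_distrib_left sum_distrib_right sum_subtractf algebra_simps)
  then have "\<forall>i<Suc k. a i = 0" using y b by (auto simp: independent_mod_def)
  then have "b j * y k \<sigma> = 0" using j by (metis a_def less_SucI)
  then show "b j = 0" using yk by simp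
qed

lemma indep_sizes_remove_cycle_cube:
  assumes "Suc k \<in> indep_sizes d (insert \<sigma> A) B"
  shows "k \<in> indep_sizes d A B"
proof -
  obtain z where z: "independent_mod d (insert \<sigma> A) B (Suc k) z"
    using assms by (auto simp: indep_sizes_def)
  show ?thesis
  proof (cases "\<forall>j<Suc k. z j \<sigma> = 0")
    case True
    have "z j \<in> cycles_on d A" if "j < Suc k" for j
      using z True that by (auto simp: independent_mod_def cycles_on_def chains_on_def)
    then have "independent_mod d A B (Suc k) z"
      using z by (auto simp: independent_mod_def)
    then show ?thesis unfolding indep_sizes_def using independent_mod_Suc by blast
  next
    case False
    then obtain p where p: "p < Suc k" "z p \<sigma> \<noteq> 0" by auto
    have "independent_mod d (insert \<sigma> A) B (Suc k) (z \<circ> Transposition.transpose p k)"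
      by (rule independent_mod_transpose[OF z p(1)]) simp
    moreover have "(z \<circ> Transposition.transpose p k) k \<sigma> \<noteq> 0" using p by simp
    ultimately show ?thesis
      unfolding indep_sizes_def by (blast dest: independent_mod_eliminate_cube)
  qed
qed

text \<open>The relation \<open>a\<close> expresses \<open>\<partial>\<tau>\<close> modulo old boundaries through the \<open>y j\<close>, so every new
  relation among \<open>y 0, \<dots>, y (k - 1)\<close> yields an old one among all \<open>y j\<close>.\<close>
lemma independent_mod_insert_boundary_cube:
  assumes y: "independent_mod d A B (Suc k) y"
    and a: "lin_comb (Suc k) a y \<in> boundaries_on d (insert \<tau> B)" "a k \<noteq> 0"
  shows "independent_mod d A (insert \<tau> B) k y"
proof -
  obtain b \<kappa> where b: "b \<in> boundaries_on d B"
    "lin_comb (Suc k) a y = (\<lambda>R. 1 * b R + \<kappa> * bd d (\<lambda>Q. if Q = \<tau> then 1 else 0) R)"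
    using a(1) by (rule boundaries_on_insert)
  have "\<kappa> \<noteq> 0"
  proof
    assume "\<kappa> = 0"
    then have "lin_comb (Suc k) a y = b" using b by auto
    then show False using y b(1) a(2) unfolding independent_mod_def by auto
  qed
  show ?thesis
    unfolding independent_mod_def
  proof (intro conjI allI impI)
    fix j assume "j < k"
    then show "y j \<in> cycles_on d A" using y by (auto simp: independent_mod_def)
  next
    fix e j assume e: "lin_comb k e y \<in> boundaries_on d (insert \<tau> B)" and j: "j < k"
    from e obtain f \<phi> where f: "f \<in> boundaries_on d B"
      "lin_comb k e y = (\<lambda>R. 1 * f R + \<phi> * bd d (\<lambda>Q. if Q = \<tau> then 1 else 0) R)"
      by (rule boundaries_on_insert)
    define g where "g = (\<lambda>i. (if i < k then \<kappa> * e i else 0) + (- \<phi>) * a i)"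
    have "lin_comb (Suc k) g y = (\<lambda>R. \<kappa> * lin_comb k e y R + (- \<phi>) * lin_comb (Suc k) a y R)"
      by (auto simp: lin_comb_def g_def sum.distrib sum_distrib_left sum_subtractf sum_negf algebra_simps)
    also have "\<dots> = (\<lambda>R. \<kappa> * f R + (- \<phi>) * b R)"
      using f(2) b(2) by (auto simp: algebra_simps)
    finally have "lin_comb (Suc k) g y \<in> boundaries_on d B"
      using boundaries_on_linear[OF f(1) b(1)] by metis
    then have g0: "\<forall>i<Suc k. g i = 0" using y unfolding independent_mod_def by metis
    then have "\<phi> = 0" using a(2) by (auto simp: g_def)
    moreover have "g j = 0" using g0 j by simp
    ultimately have "\<kappa> * e j = 0" using j by (simp add: g_def)
    then show "e j = 0" using \<open>\<kappa> \<noteq> 0\<close> by simp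
  qed
qed

lemma indep_sizes_insert_boundary_cube:
  assumes "Suc k \<in> indep_sizes d A B"
  shows "k \<in> indep_sizes d A (insert \<tau> B)"
proof -
  obtain z where z: "independent_mod d A B (Suc k) z" using assms by (auto simp: indep_sizes_def)
  show ?thesis
  proof (cases "independent_mod d A (insert \<tau> B) (Suc k) z")
    case True
    then show ?thesis unfolding indep_sizes_def using independent_mod_Suc by blast
  next
    case False
    then obtain a p where a: "lin_comb (Suc k) a z \<in> boundaries_on d (insert \<tau> B)"
      "p < Suc k" "a p \<noteq> 0"
      using z unfolding independent_mod_def by blast
    have "independent_mod d A B (Suc k) (z \<circ> Transposition.transpose p k)"
      by (rule independent_mod_transpose[OF z a(2)]) simp
    moreover have "lin_comb (Suc k) (a \<circ> Transposition.transpose p k) (z \<circ> Transposition.transpose p k)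
        \<in> boundaries_on d (insert \<tau> B)"
      using a lin_comb_transpose[OF a(2), of k a z] by simp
    moreover have "(a \<circ> Transposition.transpose p k) k \<noteq> 0" using a by simp
    ultimately show ?thesis
      unfolding indep_sizes_def by (blast dest: independent_mod_insert_boundary_cube)
  qed
qed

lemma indep_sizes_empty: "m \<in> indep_sizes d {} B \<Longrightarrow> m = 0"
proof (rule ccontr)
  assume "m \<in> indep_sizes d {} B" "m \<noteq> 0"
  then obtain z where z: "independent_mod d {} B m z" by (auto simp: indep_sizes_def)
  then have "\<forall>j<m. z j = (\<lambda>_. 0)"
    by (auto simp: independent_mod_def cycles_on_def chains_on_def)
  then have "lin_comb m (\<lambda>_. 1) z = (\<lambda>_. 0)" by (auto simp: lin_comb_def)
  then have "\<forall>j<m. (1::int) = 0" using z zero_in_boundaries_on unfolding independent_mod_def by metis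
  then show False using \<open>m \<noteq> 0\<close> by auto
qed

lemma indep_sizes_remove_cycle_cubes:
  "finite D \<Longrightarrow> m \<in> indep_sizes d (A \<union> D) B \<Longrightarrow> m - card D \<in> indep_sizes d A B"
proof (induction D arbitrary: m rule: finite_induct)
  case (insert x F)
  then show ?case
    using indep_sizes_remove_cycle_cube[of "m - 1" d x "A \<union> F" B] zero_in_indep_sizes
    by (cases m) auto
qed simp

lemma indep_sizes_le_card: "finite A \<Longrightarrow> m \<in> indep_sizes d A B \<Longrightarrow> m \<le> card A"
  using indep_sizes_remove_cycle_cubes[of A m d "{}" B] indep_sizes_empty by fastforce

lemma indep_sizes_insert_boundary_cubes:
  "finite D \<Longrightarrow> m \<in> indep_sizes d A B \<Longrightarrow> m - card D \<in> indep_sizes d A (B \<union> D)"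
proof (induction D arbitrary: m rule: finite_induct)
  case (insert x F)
  show ?case
  proof (cases "m - card F")
    case 0
    then show ?thesis using zero_in_indep_sizes insert by simp
  next
    case (Suc k)
    then have "k \<in> indep_sizes d A (insert x (B \<union> F))"
      using insert by (metis indep_sizes_insert_boundary_cube)
    moreover have "m - card (insert x F) = k" using insert.hyps Suc by simp
    ultimately show ?thesis by simp
  qed
qed simp

lemma indep_sizes_mono:
  assumes "A \<subseteq> A'" "B' \<subseteq> B"
  shows "indep_sizes d A B \<subseteq> indep_sizes d A' B'"
  using cycles_on_mono[OF assms(1)] boundaries_on_mono[OF assms(2)]
  unfolding indep_sizes_def independent_mod_def by blast

lemma rel_rank_in_indep_sizes: "finite A \<Longrightarrow> rel_rank d A B \<in> indep_sizes d A B"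
  unfolding rel_rank_def using indep_sizes_le_card zero_in_indep_sizes
  by (metis Max_in cSup_eq_Max empty_iff finite_nat_set_iff_bounded_le)

lemma rel_rank_upper: "finite A \<Longrightarrow> m \<in> indep_sizes d A B \<Longrightarrow> m \<le> rel_rank d A B"
  unfolding rel_rank_def using indep_sizes_le_card by (meson bdd_above.I cSup_upper)

lemma rel_rank_le_card: "finite A \<Longrightarrow> rel_rank d A B \<le> card A"
  using rel_rank_in_indep_sizes indep_sizes_le_card by blast

lemma rel_rank_diff_le:
  assumes "finite A'" "A \<subseteq> A'" "B \<subseteq> B'" "finite (B' - B)"
  shows "\<bar>real (rel_rank d A' B') - real (rel_rank d A B)\<bar> \<le> real (card (A' - A)) + real (card (B' - B))"
proof -
  have A: "finite A" "finite (A' - A)" "A' = A \<union> (A' - A)" using assms finite_subset by auto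
  have "B' = B \<union> (B' - B)" using assms by auto
  have "rel_rank d A' B' \<le> rel_rank d A' B"
    using rel_rank_in_indep_sizes indep_sizes_mono[OF order_refl assms(3)] rel_rank_upper assms(1)
    by blast
  moreover have "rel_rank d A' B - card (A' - A) \<le> rel_rank d A B"
    using indep_sizes_remove_cycle_cubes[OF A(2), of "rel_rank d A' B" d A B]
      rel_rank_in_indep_sizes[OF assms(1)] rel_rank_upper[OF A(1)] A(3) by metis
  moreover have "rel_rank d A B - card (B' - B) \<le> rel_rank d A B'"
    using indep_sizes_insert_boundary_cubes[OF assms(4), of "rel_rank d A B" d A B]
      rel_rank_in_indep_sizes[OF A(1)] rel_rank_upper[OF A(1)] \<open>B' = B \<union> (B' - B)\<close> by metis
  moreover have "rel_rank d A B' \<le> rel_rank d A' B'"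
    using rel_rank_in_indep_sizes[OF A(1)] indep_sizes_mono[OF assms(2) order_refl]
      rel_rank_upper[OF assms(1)] by blast
  ultimately show ?thesis by linarith
qed

section \<open>Cubes of the window\<close>

definition base_point :: "nat \<Rightarrow> cube \<Rightarrow> (nat \<Rightarrow> real)" where
  "base_point d Q = (\<lambda>i. if i < d then real_of_int (fst (Q i)) else 0)"

definition centre :: "nat \<Rightarrow> cube \<Rightarrow> (nat \<Rightarrow> real)" where
  "centre d Q = (\<lambda>i. if i < d then real_of_int (fst (Q i)) + (if snd (Q i) then 1/2 else 0) else 0)"

lemma base_point_in_cube: "base_point d Q \<in> cube_set d Q"
  by (auto simp: base_point_def cube_set_def)

lemma centre_in_cube: "centre d Q \<in> cube_set d Q"
  by (auto simp: centre_def cube_set_def)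

lemma cube_subset_if_centre_mem:
  assumes "centre d Q \<in> cube_set d R"
  shows "cube_set d Q \<subseteq> cube_set d R"
proof
  fix p assume p: "p \<in> cube_set d Q"
  have "real_of_int (fst (R i)) \<le> p i \<and> p i \<le> real_of_int (fst (R i)) + (if snd (R i) then 1 else 0)"
    if i: "i < d" for i
  proof -
    define l where "l = fst (Q i)"
    define r where "r = fst (R i)"
    have c: "real_of_int r \<le> centre d Q i" "centre d Q i \<le> real_of_int r + (if snd (R i) then 1 else 0)"
      using assms i by (auto simp: cube_set_def r_def)
    have pi: "real_of_int l \<le> p i" "p i \<le> real_of_int l + (if snd (Q i) then 1 else 0)"
      using p i by (auto simp: cube_set_def l_def)
    show ?thesis
    proof (cases "snd (Q i)")
      case True
      then have ci: "centre d Q i = real_of_int l + 1/2" using i by (simp add: centre_def l_def)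
      have "snd (R i)"
      proof (rule ccontr)
        assume "\<not> snd (R i)"
        then have "real_of_int r = real_of_int l + 1/2" using c ci by auto
        then have "2 * r = 2 * l + 1" by linarith
        then show False by presburger
      qed
      then have "r = l" using c ci by auto
      then show ?thesis using pi True \<open>snd (R i)\<close> by (simp add: r_def[symmetric])
    next
      case False
      then have "centre d Q i = real_of_int l" using i by (simp add: centre_def l_def)
      then show ?thesis using pi False c by (simp add: r_def[symmetric])
    qed
  qed
  moreover have "\<forall>i\<ge>d. p i = 0" using p by (auto simp: cube_set_def)
  ultimately show "p \<in> cube_set d R" by (auto simp: cube_set_def)
qed

lemma cube_subset_fst:
  assumes "cube_set d Q \<subseteq> cube_set d R" "i < d"
  shows "fst (R i) \<in> {fst (Q i) - 1, fst (Q i)}"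
proof -
  have "base_point d Q \<in> cube_set d R" using assms base_point_in_cube by blast
  then have "real_of_int (fst (R i)) \<le> real_of_int (fst (Q i))"
    "real_of_int (fst (Q i)) \<le> real_of_int (fst (R i)) + 1"
    using assms(2) by (auto simp: cube_set_def base_point_def split: if_splits)
  then show ?thesis by auto
qed

lemma cube_subset_Xt_imp:
  assumes "cube_set d Q \<subseteq> Xt d \<omega> t"
  obtains R where "R \<in> K d" "\<omega> R \<le> t" "cube_set d Q \<subseteq> cube_set d R"
proof -
  have "centre d Q \<in> Xt d \<omega> t" using assms centre_in_cube by blast
  then obtain R where "R \<in> K d" "\<omega> R \<le> t" "centre d Q \<in> cube_set d R" by (auto simp: Xt_def)
  then show ?thesis using that cube_subset_if_centre_mem by blast
qed

lemma Xt_mono: "s \<le> t \<Longrightarrow> Xt d \<omega> s \<subseteq> Xt d \<omega> t"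
  unfolding Xt_def by fastforce

lemma finite_card_cubes_coordinatewise:
  assumes "\<And>i. i < d \<Longrightarrow> finite (T i)"
  shows "finite {Q \<in> K d. \<forall>i<d. Q i \<in> T i}" "card {Q \<in> K d. \<forall>i<d. Q i \<in> T i} \<le> (\<Prod>i<d. card (T i))"
proof -
  let ?S = "{Q \<in> K d. \<forall>i<d. Q i \<in> T i}"
  have inj: "inj_on (\<lambda>Q. restrict Q {..<d}) ?S"
  proof (rule inj_onI)
    fix Q Q' assume Q: "Q \<in> ?S" "Q' \<in> ?S" "restrict Q {..<d} = restrict Q' {..<d}"
    show "Q = Q'"
    proof
      fix i show "Q i = Q' i"
        using fun_cong[OF Q(3), of i] Q(1,2) by (cases "i < d") (auto simp: K_def)
    qed
  qed
  have img: "(\<lambda>Q. restrict Q {..<d}) ` ?S \<subseteq> PiE {..<d} T"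
    by (rule image_subsetI, rule restrict_PiE_iff[THEN iffD2]) auto
  have fin: "finite (PiE {..<d} T)" using assms by (intro finite_PiE) auto
  show "finite ?S" using inj img fin by (meson finite_imageD finite_subset)
  have "card ?S \<le> card (PiE {..<d} T)" using card_inj_on_le[OF inj img fin] .
  also have "\<dots> = (\<Prod>i<d. card (T i))" by (simp add: card_PiE)
  finally show "card ?S \<le> (\<Prod>i<d. card (T i))" .
qed

definition box_cubes :: "nat \<Rightarrow> nat \<Rightarrow> cube set" where
  "box_cubes d n = {Q \<in> K d. \<forall>i<d. - int n \<le> fst (Q i) \<and> fst (Q i) \<le> int n}"

definition cofaces :: "nat \<Rightarrow> cube \<Rightarrow> cube set" where
  "cofaces d Q = {R \<in> K d. cube_set d Q \<subseteq> cube_set d R}"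

lemma box_cubes_eq: "box_cubes d n = {Q \<in> K d. \<forall>i<d. Q i \<in> {- int n..int n} \<times> UNIV}"
  by (auto simp: box_cubes_def mem_Times_iff)

lemma finite_box_cubes: "finite (box_cubes d n)"
  unfolding box_cubes_eq by (rule finite_card_cubes_coordinatewise) auto

lemma card_box_cubes_le: "card (box_cubes d n) \<le> (2 * (2 * n + 1)) ^ d"
proof -
  have "card (box_cubes d n) \<le> (\<Prod>i<d. card ({- int n..int n} \<times> (UNIV :: bool set)))"
    unfolding box_cubes_eq by (rule finite_card_cubes_coordinatewise) auto
  also have "card ({- int n..int n} \<times> (UNIV :: bool set)) = 2 * (2 * n + 1)"
    by (simp add: card_cartesian_product)
  finally show ?thesis by simp
qed

lemma card_box_cubes_le_normalised:
  assumes "0 < n"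
  shows "real (card (box_cubes d n)) \<le> 3 ^ d * (2 * real n) ^ d"
proof -
  have "real (card (box_cubes d n)) \<le> (2 * (2 * real n + 1)) ^ d"
    using of_nat_mono[OF card_box_cubes_le[of d n], where 'a=real] by (simp add: add.commute)
  also have "\<dots> \<le> (3 * (2 * real n)) ^ d" using assms by (intro power_mono) auto
  finally show ?thesis by (simp only: power_mult_distrib)
qed

lemma finite_cofaces: "finite (cofaces d Q)"
  and card_cofaces_le: "card (cofaces d Q) \<le> 4 ^ d"
proof -
  let ?T = "\<lambda>i. {fst (Q i) - 1, fst (Q i)} \<times> (UNIV :: bool set)"
  have sub: "cofaces d Q \<subseteq> {R \<in> K d. \<forall>i<d. R i \<in> ?T i}"
    using cube_subset_fst by (auto simp: cofaces_def mem_Times_iff)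
  have fin: "finite {R \<in> K d. \<forall>i<d. R i \<in> ?T i}"
    by (rule finite_card_cubes_coordinatewise) auto
  then show "finite (cofaces d Q)" using sub finite_subset by blast
  have "card (cofaces d Q) \<le> card {R \<in> K d. \<forall>i<d. R i \<in> ?T i}" using fin sub card_mono by blast
  also have "\<dots> \<le> (\<Prod>i<d. card (?T i))" by (rule finite_card_cubes_coordinatewise) auto
  also have "\<dots> \<le> (\<Prod>i<d. 4)"
    by (intro prod_mono) (auto simp: card_cartesian_product card_insert_if)
  finally show "card (cofaces d Q) \<le> 4 ^ d" by simp
qed

lemma cubes_Xn_subset_box_cubes: "cubes d (Xn d \<omega> t n) k \<subseteq> box_cubes d n"
proof
  fix Q assume "Q \<in> cubes d (Xn d \<omega> t n) k"
  then have Q: "Q \<in> K d" "base_point d Q \<in> Lambda d n"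
    using base_point_in_cube by (auto simp: cubes_def Xn_def)
  then have "- real n \<le> real_of_int (fst (Q i)) \<and> real_of_int (fst (Q i)) \<le> real n" if "i < d" for i
    using that by (auto simp: Lambda_def base_point_def)
  then show "Q \<in> box_cubes d n" using Q(1) unfolding box_cubes_def by fastforce
qed

lemma cube_meeting_Lambda_in_box_cubes:
  assumes "R \<in> K d" "p \<in> cube_set d R" "p \<in> Lambda d n"
  shows "R \<in> box_cubes d (Suc n)"
proof -
  have "- int (Suc n) \<le> fst (R i) \<and> fst (R i) \<le> int (Suc n)" if i: "i < d" for i
  proof -
    have "real_of_int (fst (R i)) \<le> p i" "p i \<le> real_of_int (fst (R i)) + 1"
      "- real n \<le> p i" "p i \<le> real n"
      using assms i by (auto simp: cube_set_def Lambda_def split: if_splits)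
    then show ?thesis by linarith
  qed
  then show ?thesis using assms by (auto simp: box_cubes_def)
qed

text \<open>Exhibits \<open>\<beta>_q^n(t)\<close> as a function of finitely many coordinates of \<open>\<omega>\<close>, which gives its
  measurability.\<close>
definition betti_of_cubes :: "nat \<Rightarrow> nat \<Rightarrow> nat \<Rightarrow> cube set \<Rightarrow> nat" where
  "betti_of_cubes d q n U = betti d ((\<Union>R\<in>U. cube_set d R) \<inter> Lambda d n) q"

lemma betti_n_eq_betti_of_cubes:
  "betti_n d q \<omega> t n = betti_of_cubes d q n {R \<in> box_cubes d (Suc n). \<omega> R \<le> t}"
proof -
  have "Xn d \<omega> t n = (\<Union>R\<in>{R \<in> box_cubes d (Suc n). \<omega> R \<le> t}. cube_set d R) \<inter> Lambda d n"
    using cube_meeting_Lambda_in_box_cubes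
    unfolding Xn_def Xt_def by (auto simp: box_cubes_def)
  then show ?thesis by (simp add: betti_n_def betti_of_cubes_def)
qed

lemma betti_n_le_card_box_cubes: "betti_n d q \<omega> t n \<le> card (box_cubes d n)"
proof -
  have "betti_n d q \<omega> t n \<le> card (cubes d (Xn d \<omega> t n) q)"
    unfolding betti_n_def betti_eq_rel_rank
    by (rule rel_rank_le_card[OF finite_subset[OF cubes_Xn_subset_box_cubes finite_box_cubes]])
  also have "\<dots> \<le> card (box_cubes d n)" by (rule card_mono[OF finite_box_cubes cubes_Xn_subset_box_cubes])
  finally show ?thesis .
qed

text \<open>A cube of \<open>X^n(t)\<close> that is not yet in \<open>X^n(s)\<close> lies in a coface that arrived during \<open>(s, t]\<close>.\<close>
lemma betti_n_diff_le_card: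
  assumes "s \<le> t"
  shows "\<bar>real (betti_n d q \<omega> t n) - real (betti_n d q \<omega> s n)\<bar>
     \<le> real (card {Q \<in> box_cubes d n. \<exists>R\<in>cofaces d Q. s < \<omega> R \<and> \<omega> R \<le> t})"
proof -
  let ?N = "{Q \<in> box_cubes d n. \<exists>R\<in>cofaces d Q. s < \<omega> R \<and> \<omega> R \<le> t}"
  let ?C = "\<lambda>u k. cubes d (Xn d \<omega> u n) k"
  have finC: "finite (?C u k)" for u k
    by (rule finite_subset[OF cubes_Xn_subset_box_cubes finite_box_cubes])
  have mono: "?C s k \<subseteq> ?C t k" for k
    using Xt_mono[OF assms] by (auto simp: cubes_def Xn_def)
  have new: "?C t k - ?C s k \<subseteq> ?N" for k
  proof
    fix Q assume Q: "Q \<in> ?C t k - ?C s k"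
    then have "cube_set d Q \<subseteq> Xt d \<omega> t" by (auto simp: cubes_def Xn_def)
    then obtain R where R: "R \<in> K d" "\<omega> R \<le> t" "cube_set d Q \<subseteq> cube_set d R"
      by (rule cube_subset_Xt_imp)
    have "\<not> \<omega> R \<le> s"
    proof
      assume "\<omega> R \<le> s"
      then have "cube_set d Q \<subseteq> Xt d \<omega> s" using R unfolding Xt_def by blast
      then show False using Q by (auto simp: cubes_def Xn_def)
    qed
    moreover have "Q \<in> box_cubes d n" using Q cubes_Xn_subset_box_cubes by blast
    ultimately show "Q \<in> ?N" using R by (auto simp: cofaces_def)
  qed
  have "card (?C t q - ?C s q) + card (?C t (Suc q) - ?C s (Suc q))
      = card ((?C t q - ?C s q) \<union> (?C t (Suc q) - ?C s (Suc q)))"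
    using finC by (intro card_Un_disjoint[symmetric]) (auto simp: cubes_def)
  also have "\<dots> \<le> card ?N"
    using new finite_box_cubes by (intro card_mono) auto
  finally have "card (?C t q - ?C s q) + card (?C t (Suc q) - ?C s (Suc q)) \<le> card ?N" .
  moreover have "\<bar>real (rel_rank d (?C t q) (?C t (Suc q))) - real (rel_rank d (?C s q) (?C s (Suc q)))\<bar>
      \<le> real (card (?C t q - ?C s q)) + real (card (?C t (Suc q) - ?C s (Suc q)))"
    using finC mono by (intro rel_rank_diff_le) auto
  ultimately show ?thesis by (simp add: betti_n_def betti_eq_rel_rank)
qed

section \<open>Expectations of Betti numbers\<close>

lemma measurable_cube_value:
  assumes "sets P = sets (Omega d)" "R \<in> K d"
  shows "(\<lambda>\<omega>. \<omega> R) \<in> borel_measurable P"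
proof -
  have "(\<lambda>\<omega>. \<omega> R) \<in> measurable (Omega d) (restrict_space borel {0..1::real})"
    unfolding Omega_def by (rule measurable_component_singleton[OF assms(2)])
  then show ?thesis
    by (simp add: measurable_restrict_space2_iff measurable_cong_sets[OF assms(1) refl])
qed

lemma sets_cube_value_le:
  assumes "sets P = sets (Omega d)" "R \<in> K d"
  shows "{\<omega> \<in> space P. \<omega> R \<le> t} \<in> sets P"
  using measurable_cube_value[OF assms] by measurable

lemma borel_measurable_betti_n:
  assumes "sets P = sets (Omega d)"
  shows "(\<lambda>\<omega>. real (betti_n d q \<omega> t n)) \<in> borel_measurable P"
proof -
  let ?D = "box_cubes d (Suc n)"
  let ?T = "\<lambda>\<omega>. {R \<in> ?D. \<omega> R \<le> t}"
  have "?T \<in> measurable P (count_space (Pow ?D))"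
    unfolding measurable_count_space_eq2[OF finite_Pow_iff[THEN iffD2, OF finite_box_cubes]]
  proof (intro conjI ballI)
    fix U assume "U \<in> Pow ?D"
    then have "?T -` {U} \<inter> space P = {\<omega> \<in> space P. \<forall>R\<in>?D. \<omega> R \<le> t \<longleftrightarrow> R \<in> U}"
      by auto
    also have "\<dots> \<in> sets P"
    proof (rule sets.sets_Collect_finite_All[OF _ finite_box_cubes])
      fix R assume "R \<in> ?D"
      then have "{\<omega> \<in> space P. \<omega> R \<le> t} \<in> sets P"
        by (intro sets_cube_value_le[OF assms]) (auto simp: box_cubes_def)
      then show "{\<omega> \<in> space P. \<omega> R \<le> t \<longleftrightarrow> R \<in> U} \<in> sets P"
        by (cases "R \<in> U") (auto dest: sets.sets_Collect_neg)
    qed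
    finally show "?T -` {U} \<inter> space P \<in> sets P" .
  qed auto
  then have "(\<lambda>\<omega>. real (betti_of_cubes d q n (?T \<omega>))) \<in> borel_measurable P"
    by (rule measurable_compose) simp
  then show ?thesis by (simp add: betti_n_eq_betti_of_cubes)
qed

lemma integrable_betti_n:
  assumes "prob_space P" "sets P = sets (Omega d)"
  shows "integrable P (\<lambda>\<omega>. real (betti_n d q \<omega> t n))"
proof -
  interpret prob_space P by (rule assms(1))
  show ?thesis
    using betti_n_le_card_box_cubes borel_measurable_betti_n[OF assms(2)]
    by (intro integrable_const_bound[where B = "real (card (box_cubes d n))"]) auto
qed

lemma measurable_tau:
  assumes "sets P = sets (Omega d)"
  shows "tau d x \<in> measurable P P"
proof -
  have "tau d x \<in> measurable (Omega d) (Omega d)"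
    unfolding tau_def Omega_def
  proof (rule measurable_restrict)
    fix Q assume "Q \<in> K d"
    then have "shift_cube d (\<lambda>i. - x i) Q \<in> K d" by (auto simp: K_def shift_cube_def)
    then show "(\<lambda>\<omega>. \<omega> (shift_cube d (\<lambda>i. - x i) Q))
        \<in> measurable (PiM (K d) (\<lambda>_. restrict_space borel {0..1::real})) (restrict_space borel {0..1})"
      by (rule measurable_component_singleton)
  qed
  then show ?thesis using measurable_cong_sets[OF assms assms] by simp
qed

definition cube_cdf :: "(cube \<Rightarrow> real) measure \<Rightarrow> cube \<Rightarrow> real \<Rightarrow> real" where
  "cube_cdf P R t = measure P {\<omega> \<in> space P. \<omega> R \<le> t}"

definition cube_at_origin :: "cube \<Rightarrow> cube" where
  "cube_at_origin R = (\<lambda>i. (0, snd (R i)))"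

lemma cube_at_origin_in_box_cubes: "R \<in> K d \<Longrightarrow> cube_at_origin R \<in> box_cubes d 0"
  by (auto simp: K_def box_cubes_def cube_at_origin_def)

lemma cube_cdf_cube_at_origin:
  assumes "sets P = sets (Omega d)" "stationary d P" "R \<in> K d"
  shows "cube_cdf P R t = cube_cdf P (cube_at_origin R) t"
proof -
  define x where "x = (\<lambda>i. - fst (R i))"
  have tau: "tau d x \<in> measurable P P" by (rule measurable_tau[OF assms(1)])
  have R0: "cube_at_origin R \<in> K d"
    using cube_at_origin_in_box_cubes[OF assms(3)] by (simp add: box_cubes_def)
  have "shift_cube d (\<lambda>i. - x i) (cube_at_origin R) = R"
    using assms(3) by (auto simp: shift_cube_def x_def cube_at_origin_def K_def)
  then have "tau d x -` {\<omega> \<in> space P. \<omega> (cube_at_origin R) \<le> t} \<inter> space P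
      = {\<omega> \<in> space P. \<omega> R \<le> t}"
    using measurable_space[OF tau] R0 by (auto simp: tau_def)
  then have "cube_cdf P R t = measure (distr P P (tau d x)) {\<omega> \<in> space P. \<omega> (cube_at_origin R) \<le> t}"
    using measure_distr[OF tau sets_cube_value_le[OF assms(1) R0]] by (simp add: cube_cdf_def)
  then show ?thesis using assms(2) by (simp add: stationary_def cube_cdf_def)
qed

lemma measure_cube_value_between:
  assumes "prob_space P" "sets P = sets (Omega d)" "R \<in> K d" "s \<le> t"
  shows "measure P {\<omega> \<in> space P. s < \<omega> R \<and> \<omega> R \<le> t} = cube_cdf P R t - cube_cdf P R s"
proof -
  interpret prob_space P by (rule assms(1))
  have "{\<omega> \<in> space P. s < \<omega> R \<and> \<omega> R \<le> t} = {\<omega> \<in> space P. \<omega> R \<le> t} - {\<omega> \<in> space P. \<omega> R \<le> s}"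
    by auto
  then show ?thesis
    unfolding cube_cdf_def using assms(4) sets_cube_value_le[OF assms(2,3)]
    by (simp add: finite_measure_Diff subset_eq)
qed

lemma cube_cdf_mono:
  assumes "prob_space P" "sets P = sets (Omega d)" "R \<in> K d" "s \<le> t"
  shows "cube_cdf P R s \<le> cube_cdf P R t"
  using measure_cube_value_between[OF assms]
    measure_nonneg[of P "{\<omega> \<in> space P. s < \<omega> R \<and> \<omega> R \<le> t}"] by linarith

text \<open>Stationarity moves every cube to the origin, so all marginal increments are dominated
  by those of the finitely many cubes there.\<close>
lemma measure_cube_value_between_le:
  assumes "prob_space P" "sets P = sets (Omega d)" "stationary d P" "R \<in> K d" "s \<le> t"
  shows "measure P {\<omega> \<in> space P. s < \<omega> R \<and> \<omega> R \<le> t}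
    \<le> (\<Sum>R'\<in>box_cubes d 0. cube_cdf P R' t - cube_cdf P R' s)"
proof -
  have R0: "cube_at_origin R \<in> box_cubes d 0" by (rule cube_at_origin_in_box_cubes[OF assms(4)])
  have "measure P {\<omega> \<in> space P. s < \<omega> R \<and> \<omega> R \<le> t}
      = cube_cdf P (cube_at_origin R) t - cube_cdf P (cube_at_origin R) s"
    using measure_cube_value_between[OF assms(1,2,4,5)] cube_cdf_cube_at_origin[OF assms(2,3,4)]
    by simp
  also have "\<dots> \<le> (\<Sum>R'\<in>box_cubes d 0. cube_cdf P R' t - cube_cdf P R' s)"
    using cube_cdf_mono[OF assms(1,2) _ assms(5)]
    by (intro member_le_sum[OF R0 _ finite_box_cubes]) (auto simp: box_cubes_def)
  finally show ?thesis .
qed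

lemma card_ex_le_sum_indicator:
  assumes "finite C" "\<And>Q. Q \<in> C \<Longrightarrow> finite (S Q)"
  shows "real (card {Q \<in> C. \<exists>R\<in>S Q. R \<in> G}) \<le> (\<Sum>Q\<in>C. \<Sum>R\<in>S Q. indicator G R)"
proof -
  have "real (card {Q \<in> C. \<exists>R\<in>S Q. R \<in> G}) = (\<Sum>Q\<in>C. if \<exists>R\<in>S Q. R \<in> G then 1 else 0)"
    using sum.inter_filter[OF assms(1), of "\<lambda>_. 1::real"] by simp
  also have "\<dots> \<le> (\<Sum>Q\<in>C. \<Sum>R\<in>S Q. indicator G R)"
  proof (rule sum_mono)
    fix Q assume Q: "Q \<in> C"
    show "(if \<exists>R\<in>S Q. R \<in> G then 1 else 0) \<le> (\<Sum>R\<in>S Q. indicator G R :: real)"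
    proof (cases "\<exists>R\<in>S Q. R \<in> G")
      case True
      then obtain R where R: "R \<in> S Q" "R \<in> G" by blast
      have "indicator G R \<le> (\<Sum>R\<in>S Q. indicator G R :: real)"
        by (rule member_le_sum[OF R(1)]) (auto simp: assms(2)[OF Q])
      then show ?thesis using R by simp
    qed (simp add: sum_nonneg)
  qed
  finally show ?thesis .
qed

lemma betti_n_diff_le_sum_indicator:
  assumes "s \<le> t"
  shows "\<bar>real (betti_n d q \<omega> t n) - real (betti_n d q \<omega> s n)\<bar>
    \<le> (\<Sum>Q\<in>box_cubes d n. \<Sum>R\<in>cofaces d Q. indicator {\<omega>. s < \<omega> R \<and> \<omega> R \<le> t} \<omega>)"
proof -
  have "\<bar>real (betti_n d q \<omega> t n) - real (betti_n d q \<omega> s n)\<bar>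
      \<le> real (card {Q \<in> box_cubes d n. \<exists>R\<in>cofaces d Q. R \<in> {R. s < \<omega> R \<and> \<omega> R \<le> t}})"
    using betti_n_diff_le_card[OF assms] by simp
  also have "\<dots> \<le> (\<Sum>Q\<in>box_cubes d n. \<Sum>R\<in>cofaces d Q. indicator {R. s < \<omega> R \<and> \<omega> R \<le> t} R)"
    by (rule card_ex_le_sum_indicator[OF finite_box_cubes finite_cofaces])
  finally show ?thesis by (simp add: indicator_def)
qed

lemma integral_betti_n_diff_le:
  assumes "prob_space P" "sets P = sets (Omega d)" "s \<le> t"
  shows "\<bar>(\<integral>\<omega>. real (betti_n d q \<omega> t n) \<partial>P) - (\<integral>\<omega>. real (betti_n d q \<omega> s n) \<partial>P)\<bar>
     \<le> (\<Sum>Q\<in>box_cubes d n. \<Sum>R\<in>cofaces d Q. measure P {\<omega> \<in> space P. s < \<omega> R \<and> \<omega> R \<le> t})"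
proof -
  interpret prob_space P by (rule assms(1))
  define G where "G = (\<lambda>R. {\<omega> \<in> space P. s < \<omega> R \<and> \<omega> R \<le> t})"
  have int_G: "integrable P (indicator (G R) :: _ \<Rightarrow> real)" if "R \<in> cofaces d Q" for Q R
  proof -
    have "R \<in> K d" using that by (simp add: cofaces_def)
    then have "G R = {\<omega> \<in> space P. \<omega> R \<le> t} - {\<omega> \<in> space P. \<omega> R \<le> s}"
      "{\<omega> \<in> space P. \<omega> R \<le> t} \<in> sets P" "{\<omega> \<in> space P. \<omega> R \<le> s} \<in> sets P"
      using sets_cube_value_le[OF assms(2)] by (auto simp: G_def)
    then show ?thesis by (auto intro!: integrable_real_indicator simp: less_top[symmetric])
  qed
  have int_sum: "integrable P (\<lambda>\<omega>. \<Sum>Q\<in>box_cubes d n. \<Sum>R\<in>cofaces d Q. indicator (G R) \<omega> :: real)"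
    using int_G by (intro Bochner_Integration.integrable_sum) auto
  have "\<bar>real (betti_n d q \<omega> t n) - real (betti_n d q \<omega> s n)\<bar>
      \<le> (\<Sum>Q\<in>box_cubes d n. \<Sum>R\<in>cofaces d Q. indicator (G R) \<omega>)" if "\<omega> \<in> space P" for \<omega>
    using betti_n_diff_le_sum_indicator[OF assms(3)] that by (simp add: G_def indicator_def)
  then have "\<bar>\<integral>\<omega>. real (betti_n d q \<omega> t n) - real (betti_n d q \<omega> s n) \<partial>P\<bar>
      \<le> (\<integral>\<omega>. (\<Sum>Q\<in>box_cubes d n. \<Sum>R\<in>cofaces d Q. indicator (G R) \<omega>) \<partial>P)"
    using integrable_betti_n[OF assms(1,2)] int_sum
    by (intro order_trans[OF integral_abs_bound] integral_mono) auto
  also have "\<dots> = (\<Sum>Q\<in>box_cubes d n. \<Sum>R\<in>cofaces d Q. measure P (G R))"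
  proof -
    have "G R \<inter> space P = G R" for R by (auto simp: G_def)
    then show ?thesis using int_G
      by (simp add: Bochner_Integration.integral_sum Bochner_Integration.integrable_sum integral_indicator)
  qed
  finally show ?thesis
    using integrable_betti_n[OF assms(1,2)] by (simp add: G_def)
qed

lemma betti_n_normalised_le:
  assumes "0 < d"
  shows "real (betti_n d q \<omega> t n) / (2 * real n) ^ d \<le> 3 ^ d"
proof (cases "n = 0")
  case False
  have "real (betti_n d q \<omega> t n) \<le> real (card (box_cubes d n))"
    using betti_n_le_card_box_cubes by simp
  also have "\<dots> \<le> 3 ^ d * (2 * real n) ^ d"
    using False by (intro card_box_cubes_le_normalised) simp
  finally show ?thesis using False by (simp add: divide_le_eq)
qed (use assms in \<open>simp add: power_0_left\<close>)

lemma sum_cube_cdf_diff_nonneg: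
  assumes "prob_space P" "sets P = sets (Omega d)" "s \<le> t"
  shows "0 \<le> (\<Sum>R\<in>box_cubes d 0. cube_cdf P R t - cube_cdf P R s)"
  using cube_cdf_mono[OF assms(1,2) _ assms(3)] by (intro sum_nonneg) (auto simp: box_cubes_def)

lemma expected_betti_diff_le:
  assumes "prob_space P" "sets P = sets (Omega d)" "stationary d P" "s \<le> t"
  shows "\<bar>(\<integral>\<omega>. real (betti_n d q \<omega> t n) \<partial>P) - (\<integral>\<omega>. real (betti_n d q \<omega> s n) \<partial>P)\<bar>
    \<le> real (card (box_cubes d n)) * (4 ^ d * (\<Sum>R\<in>box_cubes d 0. cube_cdf P R t - cube_cdf P R s))"
    (is "_ \<le> _ * (_ * ?\<Delta>)")
proof -
  have "\<bar>(\<integral>\<omega>. real (betti_n d q \<omega> t n) \<partial>P) - (\<integral>\<omega>. real (betti_n d q \<omega> s n) \<partial>P)\<bar>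
      \<le> (\<Sum>Q\<in>box_cubes d n. \<Sum>R\<in>cofaces d Q. measure P {\<omega> \<in> space P. s < \<omega> R \<and> \<omega> R \<le> t})"
    by (rule integral_betti_n_diff_le[OF assms(1,2,4)])
  also have "\<dots> \<le> (\<Sum>Q\<in>box_cubes d n. \<Sum>R\<in>cofaces d Q. ?\<Delta>)"
    using measure_cube_value_between_le[OF assms(1,2,3) _ assms(4)]
    by (intro sum_mono) (auto simp: cofaces_def)
  also have "\<dots> \<le> (\<Sum>Q\<in>box_cubes d n. 4 ^ d * ?\<Delta>)"
  proof (rule sum_mono)
    fix Q
    have "real (card (cofaces d Q)) \<le> 4 ^ d"
      using card_cofaces_le[of d Q] by (metis of_nat_le_iff of_nat_numeral of_nat_power)
    then show "(\<Sum>R\<in>cofaces d Q. ?\<Delta>) \<le> 4 ^ d * ?\<Delta>"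
      using sum_cube_cdf_diff_nonneg[OF assms(1,2,4)] by (simp add: mult_right_mono)
  qed
  finally show ?thesis by simp
qed

lemma expected_betti_normalised_diff_le:
  assumes "prob_space P" "sets P = sets (Omega d)" "stationary d P" "0 < d" "s \<le> t"
  shows "\<bar>(\<integral>\<omega>. real (betti_n d q \<omega> t n) \<partial>P) / (2 * real n) ^ d
          - (\<integral>\<omega>. real (betti_n d q \<omega> s n) \<partial>P) / (2 * real n) ^ d\<bar>
    \<le> 12 ^ d * (\<Sum>R\<in>box_cubes d 0. cube_cdf P R t - cube_cdf P R s)"
    (is "\<bar>?I t / ?c - ?I s / ?c\<bar> \<le> _ * ?\<Delta>")
proof (cases "n = 0")
  case True
  then show ?thesis
    using assms(4) sum_cube_cdf_diff_nonneg[OF assms(1,2,5)] by (simp add: power_0_left)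
next
  case False
  then have "0 < ?c" by simp
  have "\<bar>?I t - ?I s\<bar> \<le> real (card (box_cubes d n)) * (4 ^ d * ?\<Delta>)"
    by (rule expected_betti_diff_le[OF assms(1,2,3,5)])
  also have "\<dots> \<le> 3 ^ d * ?c * (4 ^ d * ?\<Delta>)"
    using False sum_cube_cdf_diff_nonneg[OF assms(1,2,5)]
    by (intro mult_right_mono card_box_cubes_le_normalised) auto
  also have "\<dots> = 12 ^ d * ?\<Delta> * ?c"
  proof -
    have twelve: "(3::real) ^ d * 4 ^ d = 12 ^ d" by (simp flip: power_mult_distrib)
    show ?thesis by (simp add: twelve[symmetric] ac_simps)
  qed
  finally have bound: "\<bar>?I t - ?I s\<bar> \<le> 12 ^ d * ?\<Delta> * ?c" .
  have "\<bar>?I t / ?c - ?I s / ?c\<bar> = \<bar>?I t - ?I s\<bar> / ?c"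
    using \<open>0 < ?c\<close> by (simp add: diff_divide_distrib[symmetric] abs_divide)
  also have "\<dots> \<le> 12 ^ d * ?\<Delta>"
    using bound \<open>0 < ?c\<close> by (simp add: pos_divide_le_eq)
  finally show ?thesis .
qed

lemma expected_betti_uniformly_equicontinuous:
  assumes "prob_space P" "sets P = sets (Omega d)" "stationary d P" "0 < d"
    and "\<forall>Q\<in>K d. continuous_on {0..1} (\<lambda>t. measure P {\<omega> \<in> space P. \<omega> Q \<le> t})"
    and "0 < e"
  shows "\<exists>\<delta>>0. \<forall>n. \<forall>s\<in>{0..1}. \<forall>t\<in>{0..1}. dist s t < \<delta> \<longrightarrow>
    dist ((\<integral>\<omega>. real (betti_n d q \<omega> s n) \<partial>P) / (2 * real n) ^ d)
         ((\<integral>\<omega>. real (betti_n d q \<omega> t n) \<partial>P) / (2 * real n) ^ d) \<le> e"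
proof -
  define G where "G = (\<lambda>t. \<Sum>R\<in>box_cubes d 0. cube_cdf P R t)"
  have "continuous_on {0..1} G"
    using assms(5) unfolding G_def cube_cdf_def by (intro continuous_on_sum) (auto simp: box_cubes_def)
  then have "uniformly_continuous_on {0..1} G" by (simp add: compact_uniformly_continuous)
  then obtain \<delta> where \<delta>: "\<delta> > 0" "\<And>s t. s \<in> {0..1} \<Longrightarrow> t \<in> {0..1} \<Longrightarrow> dist t s < \<delta> \<Longrightarrow>
      dist (G t) (G s) < e / 12 ^ d"
    using assms(6) unfolding uniformly_continuous_on_def by (metis divide_pos_pos zero_less_power zero_less_numeral)
  have bound: "dist ((\<integral>\<omega>. real (betti_n d q \<omega> s n) \<partial>P) / (2 * real n) ^ d)
      ((\<integral>\<omega>. real (betti_n d q \<omega> t n) \<partial>P) / (2 * real n) ^ d) \<le> e"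
    if "s \<in> {0..1}" "t \<in> {0..1}" "dist s t < \<delta>" "s \<le> t" for n s t
  proof -
    have "\<bar>G t - G s\<bar> < e / 12 ^ d"
      using \<delta>(2)[OF that(1,2)] that(3) by (simp add: dist_real_def abs_minus_commute)
    then have "12 ^ d * (G t - G s) \<le> 12 ^ d * (e / 12 ^ d)"
      by (intro mult_left_mono) auto
    then show ?thesis
      using expected_betti_normalised_diff_le[OF assms(1-4) that(4), of q n]
      by (simp add: G_def sum_subtractf dist_real_def abs_minus_commute)
  qed
  show ?thesis
  proof (intro exI[of _ \<delta>] conjI allI ballI impI)
    fix n s t assume "s \<in> {0..1::real}" "t \<in> {0..1::real}" "dist s t < \<delta>"
    then show "dist ((\<integral>\<omega>. real (betti_n d q \<omega> s n) \<partial>P) / (2 * real n) ^ d)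
        ((\<integral>\<omega>. real (betti_n d q \<omega> t n) \<partial>P) / (2 * real n) ^ d) \<le> e"
      using bound[of s t n] bound[of t s n] by (cases "s \<le> t") (auto simp: dist_commute)
  qed (rule \<delta>(1))
qed

lemma expected_betti_normalised_tendsto:
  assumes "prob_space P" "sets P = sets (Omega d)" "0 < d"
    and "AE \<omega> in P. (\<lambda>n. real (betti_n d q \<omega> t n) / (2 * real n) ^ d) \<longlonglongrightarrow> b"
  shows "(\<lambda>n. (\<integral>\<omega>. real (betti_n d q \<omega> t n) \<partial>P) / (2 * real n) ^ d) \<longlonglongrightarrow> b"
proof -
  interpret prob_space P by (rule assms(1))
  have "(\<lambda>n. \<integral>\<omega>. real (betti_n d q \<omega> t n) / (2 * real n) ^ d \<partial>P) \<longlonglongrightarrow> (\<integral>\<omega>. b \<partial>P)"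
    using assms(4) borel_measurable_betti_n[OF assms(2)] betti_n_normalised_le[OF assms(3)]
    by (intro integral_dominated_convergence[where w = "\<lambda>_. 3 ^ d"]) auto
  then show ?thesis by (simp add: prob_space)
qed

section \<open>Uniform convergence\<close>

lemma uniform_limit_if_uniformly_equicontinuous:
  fixes f :: "nat \<Rightarrow> 'a::metric_space \<Rightarrow> 'b::metric_space"
  assumes "compact S"
    and lim: "\<And>x. x \<in> S \<Longrightarrow> (\<lambda>n. f n x) \<longlonglongrightarrow> g x"
    and equi: "\<And>e. 0 < e \<Longrightarrow> \<exists>\<delta>>0. \<forall>n. \<forall>x\<in>S. \<forall>y\<in>S. dist x y < \<delta> \<longrightarrow> dist (f n x) (f n y) \<le> e"
  shows "uniform_limit S f g sequentially"
proof (rule uniform_limitI)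
  fix e :: real assume "0 < e"
  then have "0 < e / 4" by simp
  then obtain \<delta> where \<delta>: "\<delta> > 0"
    "\<forall>n. \<forall>x\<in>S. \<forall>y\<in>S. dist x y < \<delta> \<longrightarrow> dist (f n x) (f n y) \<le> e / 4"
    using equi[OF \<open>0 < e / 4\<close>] by blast
  have g: "dist (g x) (g y) \<le> e / 4" if "x \<in> S" "y \<in> S" "dist x y < \<delta>" for x y
  proof (rule tendsto_upperbound)
    show "(\<lambda>n. dist (f n x) (f n y)) \<longlonglongrightarrow> dist (g x) (g y)"
      using lim that by (intro tendsto_dist) auto
    show "\<forall>\<^sub>F n in sequentially. dist (f n x) (f n y) \<le> e / 4" using \<delta>(2) that by simp
  qed simp
  have "\<exists>N. finite N \<and> N \<subseteq> S \<and> S \<subseteq> (\<Union>y\<in>N. ball y \<delta>)"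
    using seq_compact_imp_totally_bounded[OF compact_imp_seq_compact[OF assms(1)]] \<delta>(1) by simp
  then obtain N where N: "finite N" "N \<subseteq> S" "S \<subseteq> (\<Union>y\<in>N. ball y \<delta>)" by blast
  have "\<forall>\<^sub>F n in sequentially. \<forall>y\<in>N. dist (f n y) (g y) < e / 3"
  proof (rule eventually_ball_finite[OF N(1)], rule ballI)
    fix y assume "y \<in> N"
    then have "(\<lambda>n. f n y) \<longlonglongrightarrow> g y" using lim N(2) by blast
    then show "\<forall>\<^sub>F n in sequentially. dist (f n y) (g y) < e / 3"
      using \<open>0 < e\<close> by (intro tendstoD) auto
  qed
  then show "\<forall>\<^sub>F n in sequentially. \<forall>x\<in>S. dist (f n x) (g x) < e"
  proof (rule eventually_mono, intro ballI)
    fix n x assume close: "\<forall>y\<in>N. dist (f n y) (g y) < e / 3" and "x \<in> S"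
    from N(3) \<open>x \<in> S\<close> obtain y where y: "y \<in> N" "x \<in> ball y \<delta>" by (auto dest: subsetD)
    then have "y \<in> S" "dist x y < \<delta>" using N(2) by (auto simp: dist_commute)
    then have "dist (f n x) (f n y) \<le> e / 4" "dist (g y) (g x) \<le> e / 4"
      using \<delta>(2) g[of y x] \<open>x \<in> S\<close> by (simp_all add: dist_commute)
    moreover have "dist (f n y) (g y) < e / 3" using close y(1) by blast
    moreover have "dist (f n x) (g x) \<le> dist (f n x) (f n y) + dist (f n y) (g y) + dist (g y) (g x)"
      using dist_triangle[of "f n x" "g x" "f n y"] dist_triangle[of "f n y" "g x" "g y"] by linarith
    ultimately show "dist (f n x) (g x) < e" using \<open>0 < e\<close> by linarith
  qed
qed

theorem lemma3p3:
  fixes d q :: nat and P :: "(cube \<Rightarrow> real) measure" and bhat :: "real \<Rightarrow> real"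
  assumes "prob_space P"
    and "sets P = sets (Omega d)"
    and "stationary d P"
    and "ergodic d P"
    and "q < d"
    and "\<forall>t\<in>{0..1}. AE \<omega> in P.
           (\<lambda>n. real (betti_n d q \<omega> t n) / (2 * real n) ^ d) \<longlonglongrightarrow> bhat t"
    and "\<forall>Q\<in>K d. continuous_on {0..1} (\<lambda>t. measure P {\<omega> \<in> space P. \<omega> Q \<le> t})"
  shows "uniform_limit {0..1}
           (\<lambda>n t. (\<integral>\<omega>. real (betti_n d q \<omega> t n) \<partial>P) / (2 * real n) ^ d)
           bhat sequentially"
proof (rule uniform_limit_if_uniformly_equicontinuous[OF compact_Icc])
  have "0 < d" using assms(5) by simp
  show "(\<lambda>n. (\<integral>\<omega>. real (betti_n d q \<omega> t n) \<partial>P) / (2 * real n) ^ d) \<longlonglongrightarrow> bhat t"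
    if "t \<in> {0..1}" for t
    using expected_betti_normalised_tendsto[OF assms(1,2) \<open>0 < d\<close>] assms(6) that by blast
  show "\<exists>\<delta>>0. \<forall>n. \<forall>s\<in>{0..1}. \<forall>t\<in>{0..1}. dist s t < \<delta> \<longrightarrow>
      dist ((\<integral>\<omega>. real (betti_n d q \<omega> s n) \<partial>P) / (2 * real n) ^ d)
           ((\<integral>\<omega>. real (betti_n d q \<omega> t n) \<partial>P) / (2 * real n) ^ d) \<le> e"
    if "0 < e" for e
    by (rule expected_betti_uniformly_equicontinuous[OF assms(1-3) \<open>0 < d\<close> assms(7) that])
qed

end
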